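(* Let $n_1,\dots,n_r$ be positive integers, pairwise distinct ($n_j\ne n_l$ for $j\ne l$), and let $\mathcal R$ be a real Lie algebra of block diagonal matrices $\mathrm{diag}(A_1,\dots,A_r)$ with $A_j\in su(n_j)$ for each $j$. Assume weak subspace controllability: for every $j\in\{1,\dots,r\}$ and every $Z\in su(n_j)$ there is an element $\mathrm{diag}(A_1,\dots,A_r)\in\mathcal R$ with $A_j=Z$. Then $\mathcal R=\bigoplus_{j=1}^r su(n_j)$ (all block diagonal matrices with arbitrary blocks $A_j\in su(n_j)$). *)

theory Defs
  imports "Jordan_Normal_Form.Schur_Decomposition"
begin

definition mtrace :: "complex mat \<Rightarrow> complex" where
  "mtrace A = (\<Sum>i<dim_row A. A $$ (i, i))"

definition su :: "nat \<Rightarrow> complex mat set" where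
  "su n = {A \<in> carrier_mat n n. mat_adjoint A = - A \<and> mtrace A = 0}"

text \<open>Block diagonal matrices diag(A_0,...,A_{r-1}) are represented by their family of
  blocks j \<mapsto> A_j (j < r); unused indices j \<ge> r carry the 0 x 0 matrix.\<close>
definition block_su :: "(nat \<Rightarrow> nat) \<Rightarrow> nat \<Rightarrow> (nat \<Rightarrow> complex mat) set" where
  "block_su n r = {A. (\<forall>j<r. A j \<in> su (n j)) \<and> (\<forall>j\<ge>r. A j = 0\<^sub>m 0 0)}"

definition bd_add :: "(nat \<Rightarrow> complex mat) \<Rightarrow> (nat \<Rightarrow> complex mat) \<Rightarrow> (nat \<Rightarrow> complex mat)" where
  "bd_add A B = (\<lambda>j. A j + B j)"

definition bd_scale :: "real \<Rightarrow> (nat \<Rightarrow> complex mat) \<Rightarrow> (nat \<Rightarrow> complex mat)" where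
  "bd_scale c A = (\<lambda>j. complex_of_real c \<cdot>\<^sub>m A j)"

definition bd_bracket :: "(nat \<Rightarrow> complex mat) \<Rightarrow> (nat \<Rightarrow> complex mat) \<Rightarrow> (nat \<Rightarrow> complex mat)" where
  "bd_bracket A B = (\<lambda>j. A j * B j - B j * A j)"

definition real_lie_subalgebra :: "(nat \<Rightarrow> complex mat) set \<Rightarrow> bool" where
  "real_lie_subalgebra L \<longleftrightarrow>
     L \<noteq> {} \<and>
     (\<forall>A\<in>L. \<forall>B\<in>L. bd_add A B \<in> L) \<and>
     (\<forall>c. \<forall>A\<in>L. bd_scale c A \<in> L) \<and>
     (\<forall>A\<in>L. \<forall>B\<in>L. bd_bracket A B \<in> L)"

end

theory Submission
  imports Defs "HOL-Library.Function_Algebras" "HOL-Library.Indicator_Function"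
begin

(* For each block j, weak controllability makes the matrices X with diag(0,...,X,...,0) in R an
   ideal of su(n_j), and su(n_j) is simple, so it suffices to find one nonzero such X. This is
   done by induction on the number of blocks. For two blocks
   of sizes n_b < n_a, a zero ideal in block a would make R the graph of a real-linear map from
   su(n_b) onto su(n_a), which the real dimensions n_b^2 - 1 < n_a^2 - 1 forbid. For three or
   more blocks, the induction hypothesis applied to R with one block l deleted yields elements
   of R that agree with any prescribed element in block j and vanish outside the blocks j and l;
   the bracket of two such elements for different l lives in block j alone and can be chosen
   nonzero. *)

lemma sum_eq_single:
  "finite S \<Longrightarrow> c \<in> S \<Longrightarrow> (\<And>k. k \<in> S \<Longrightarrow> k \<noteq> c \<Longrightarrow> f k = 0) \<Longrightarrow> sum f S = f c"
  by (subst sum.mono_neutral_right[of S "{c}"]) auto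

lemma sum_eq_two:
  assumes "finite S" "p \<in> S" "q \<in> S" "p \<noteq> q" "\<And>k. k \<in> S \<Longrightarrow> k \<noteq> p \<Longrightarrow> k \<noteq> q \<Longrightarrow> f k = 0"
  shows "sum f S = f p + f q"
  using assms by (subst sum.mono_neutral_right[of S "{p,q}"]) auto

section \<open>The Lie algebra \<open>su(n)\<close>\<close>

lemma mat_adjoint_carrier: "A \<in> carrier_mat n n \<Longrightarrow> mat_adjoint A \<in> carrier_mat n n"
  unfolding mat_adjoint_def by (simp add: mat_of_rows_def)

lemma mat_adjoint_index:
  "A \<in> carrier_mat n n \<Longrightarrow> i < n \<Longrightarrow> j < n \<Longrightarrow> mat_adjoint A $$ (i,j) = cnj (A $$ (j,i))"
  unfolding mat_adjoint_def by (simp add: mat_of_rows_def)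

lemma mem_su_iff:
  "A \<in> su n \<longleftrightarrow> A \<in> carrier_mat n n \<and> (\<forall>i<n. \<forall>j<n. A $$ (i,j) = - cnj (A $$ (j,i)))
     \<and> (\<Sum>i<n. A $$ (i,i)) = 0"
proof (cases "A \<in> carrier_mat n n")
  case A: True
  have "mat_adjoint A = - A \<longleftrightarrow> (\<forall>i<n. \<forall>j<n. cnj (A $$ (j,i)) = - A $$ (i,j))"
    using A mat_adjoint_carrier[OF A] by (auto simp: mat_eq_iff mat_adjoint_index)
  also have "\<dots> \<longleftrightarrow> (\<forall>i<n. \<forall>j<n. A $$ (i,j) = - cnj (A $$ (j,i)))"
    by (metis complex_cnj_cnj complex_cnj_minus minus_minus)
  finally show ?thesis using A by (simp add: su_def mtrace_def)
qed (simp add: su_def)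

lemma su_carrier: "A \<in> su n \<Longrightarrow> A \<in> carrier_mat n n"
  by (simp add: su_def)

lemma su_skew: "A \<in> su n \<Longrightarrow> i < n \<Longrightarrow> j < n \<Longrightarrow> A $$ (i,j) = - cnj (A $$ (j,i))"
  unfolding mem_su_iff by blast

lemma su_trace: "A \<in> su n \<Longrightarrow> (\<Sum>i<n. A $$ (i,i)) = 0"
  unfolding mem_su_iff by blast

lemma su_diag_Re: "A \<in> su n \<Longrightarrow> i < n \<Longrightarrow> Re (A $$ (i,i)) = 0"
  using su_skew[of A n i i] by (simp add: complex_eq_iff)

lemma zero_mem_su: "0\<^sub>m n n \<in> su n"
  unfolding mem_su_iff by simp

lemma su_add: assumes "A \<in> su n" "B \<in> su n" shows "A + B \<in> su n"
proof -
  have "(A + B) $$ (i,j) = - cnj ((A + B) $$ (j,i))" if "i < n" "j < n" for i j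
    using su_skew[OF assms(1) that] su_skew[OF assms(2) that] su_carrier[OF assms(1)]
      su_carrier[OF assms(2)] that by simp
  moreover have "(\<Sum>i<n. (A + B) $$ (i,i)) = 0"
    using su_trace[OF assms(1)] su_trace[OF assms(2)] su_carrier[OF assms(2)]
    by (simp add: sum.distrib)
  moreover have "A + B \<in> carrier_mat n n" using su_carrier[OF assms(2)] by simp
  ultimately show ?thesis unfolding mem_su_iff by blast
qed

lemma su_scale: assumes "A \<in> su n" shows "complex_of_real c \<cdot>\<^sub>m A \<in> su n"
proof -
  have "(complex_of_real c \<cdot>\<^sub>m A) $$ (i,j) = - cnj ((complex_of_real c \<cdot>\<^sub>m A) $$ (j,i))"
    if "i < n" "j < n" for i j
    using su_skew[OF assms that] su_carrier[OF assms] that by simp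
  moreover have "(\<Sum>i<n. (complex_of_real c \<cdot>\<^sub>m A) $$ (i,i)) = 0"
    using su_trace[OF assms] su_carrier[OF assms] by (simp add: sum_distrib_left[symmetric])
  moreover have "complex_of_real c \<cdot>\<^sub>m A \<in> carrier_mat n n" using su_carrier[OF assms] by simp
  ultimately show ?thesis unfolding mem_su_iff by blast
qed

lemma su_le_1: assumes "n \<le> 1" shows "su n = {0\<^sub>m n n}"
proof -
  have "A = 0\<^sub>m n n" if A: "A \<in> su n" for A
  proof (rule eq_matI)
    fix i j assume "i < dim_row (0\<^sub>m n n :: complex mat)" "j < dim_col (0\<^sub>m n n :: complex mat)"
    with assms have "i = 0" "j = 0" "n = 1" by auto
    thus "A $$ (i,j) = 0\<^sub>m n n $$ (i,j)" using su_trace[OF A] by simp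
  qed (use su_carrier[OF A] in auto)
  thus ?thesis using zero_mem_su by blast
qed

lemma commutator_mat_diag:
  fixes X :: "'a :: comm_ring mat"
  assumes "X \<in> carrier_mat n n"
  shows "X * mat_diag n d - mat_diag n d * X = mat n n (\<lambda>(i,j). (d j - d i) * X $$ (i,j))"
  using assms by (intro eq_matI) (auto simp: mat_diag_mult_left mat_diag_mult_right algebra_simps)

lemma mat_diag_su:
  assumes "\<And>k. k < n \<Longrightarrow> Re (d k) = 0" "(\<Sum>k<n. d k) = 0"
  shows "mat_diag n d \<in> su n"
proof -
  have "mat_diag n d $$ (i,j) = - cnj (mat_diag n d $$ (j,i))" if "i < n" "j < n" for i j
    using assms(1)[OF that(1)] that by (simp add: mat_diag_def complex_eq_iff)
  moreover have "(\<Sum>k<n. mat_diag n d $$ (k,k)) = 0" using assms(2) by (simp add: mat_diag_def)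
  ultimately show ?thesis unfolding mem_su_iff using mat_diag_dim by blast
qed

definition skew_unit :: "nat \<Rightarrow> nat \<Rightarrow> nat \<Rightarrow> complex \<Rightarrow> complex mat" where
  "skew_unit n p q a =
     mat n n (\<lambda>(i,j). if i = p \<and> j = q then a else if i = q \<and> j = p then - cnj a else 0)"

definition skew_diag :: "nat \<Rightarrow> nat \<Rightarrow> nat \<Rightarrow> complex mat" where
  "skew_diag n p q = mat_diag n (\<lambda>k. \<i> * (of_bool (k = p) - of_bool (k = q)))"

lemma skew_diag_carrier [simp]: "skew_diag n p q \<in> carrier_mat n n"
  and skew_diag_dim [simp]: "dim_row (skew_diag n p q) = n" "dim_col (skew_diag n p q) = n"
  by (simp_all add: skew_diag_def mat_diag_def)

lemma skew_diag_self: "skew_diag n p p = 0\<^sub>m n n"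
  by (auto simp: skew_diag_def mat_diag_def)

lemma skew_unit_carrier [simp]: "skew_unit n p q a \<in> carrier_mat n n"
  and skew_unit_dim [simp]: "dim_row (skew_unit n p q a) = n" "dim_col (skew_unit n p q a) = n"
  by (simp_all add: skew_unit_def)

lemma skew_unit_index:
  "i < n \<Longrightarrow> j < n \<Longrightarrow>
   skew_unit n p q a $$ (i,j) = (if i = p \<and> j = q then a else if i = q \<and> j = p then - cnj a else 0)"
  by (simp add: skew_unit_def)

lemma skew_unit_su: assumes "p \<noteq> q" "p < n" "q < n" shows "skew_unit n p q a \<in> su n"
proof -
  have "(\<Sum>i<n. skew_unit n p q a $$ (i,i)) = 0"
    using assms by (intro sum.neutral) (auto simp: skew_unit_index)
  moreover have "skew_unit n p q a $$ (i,j) = - cnj (skew_unit n p q a $$ (j,i))"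
    if "i < n" "j < n" for i j
    using assms that
    by (cases "i = p"; cases "j = q"; cases "i = q"; cases "j = p"; simp add: skew_unit_index)
  ultimately show ?thesis unfolding mem_su_iff using skew_unit_carrier by blast
qed

lemma skew_diag_su: "p < n \<Longrightarrow> q < n \<Longrightarrow> skew_diag n p q \<in> su n"
  unfolding skew_diag_def
  by (rule mat_diag_su) (simp_all add: sum_distrib_left[symmetric] sum_subtractf)

lemma skew_unit_swap: "p \<noteq> q \<Longrightarrow> skew_unit n q p b = skew_unit n p q (- cnj b)"
  by (rule eq_matI) (auto simp: skew_unit_index)

lemma skew_unit_add: "skew_unit n p q (a + b) = skew_unit n p q a + skew_unit n p q b"
proof (rule eq_matI)
  fix i j assume "i < dim_row (skew_unit n p q a + skew_unit n p q b)"
    "j < dim_col (skew_unit n p q a + skew_unit n p q b)"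
  hence "i < n" "j < n" by auto
  thus "skew_unit n p q (a + b) $$ (i,j) = (skew_unit n p q a + skew_unit n p q b) $$ (i,j)"
    by (cases "i = p"; cases "j = q"; cases "i = q"; cases "j = p"; simp add: skew_unit_index)
qed simp_all

lemma skew_unit_scale: "skew_unit n p q (of_real c * a) = of_real c \<cdot>\<^sub>m skew_unit n p q a"
proof (rule eq_matI)
  fix i j assume "i < dim_row (of_real c \<cdot>\<^sub>m skew_unit n p q a)"
    "j < dim_col (of_real c \<cdot>\<^sub>m skew_unit n p q a)"
  hence "i < n" "j < n" by auto
  thus "skew_unit n p q (of_real c * a) $$ (i,j) = (of_real c \<cdot>\<^sub>m skew_unit n p q a) $$ (i,j)"
    by (cases "i = p"; cases "j = q"; cases "i = q"; cases "j = p"; simp add: skew_unit_index)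
qed simp_all

lemma skew_unit_mult_index:
  assumes "p \<noteq> q" "p < n" "q < n" "i < n" "j < n" "B \<in> carrier_mat n n"
  shows "(skew_unit n p q a * B) $$ (i,j) =
    (if i = p then a * B $$ (q,j) else if i = q then - cnj a * B $$ (p,j) else 0)"
proof -
  have prod: "(skew_unit n p q a * B) $$ (i,j) = (\<Sum>k<n. skew_unit n p q a $$ (i,k) * B $$ (k,j))"
    using assms by (simp add: scalar_prod_def lessThan_atLeast0)
  consider "i = p" | "i = q" | "i \<noteq> p" "i \<noteq> q" by blast
  thus ?thesis
  proof cases
    case 1
    have "(\<Sum>k<n. skew_unit n p q a $$ (i,k) * B $$ (k,j)) = skew_unit n p q a $$ (i,q) * B $$ (q,j)"
      by (rule sum_eq_single) (use assms 1 in \<open>auto simp: skew_unit_index\<close>)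
    thus ?thesis using assms 1 prod by (simp add: skew_unit_index)
  next
    case 2
    have "(\<Sum>k<n. skew_unit n p q a $$ (i,k) * B $$ (k,j)) = skew_unit n p q a $$ (i,p) * B $$ (p,j)"
      by (rule sum_eq_single) (use assms 2 in \<open>auto simp: skew_unit_index\<close>)
    thus ?thesis using assms 2 prod by (simp add: skew_unit_index)
  next
    case 3
    thus ?thesis using assms prod by (simp add: skew_unit_index)
  qed
qed

lemma skew_unit_commutator_chain:
  assumes "p \<noteq> q" "q \<noteq> r" "p \<noteq> r" "p < n" "q < n" "r < n"
  shows "skew_unit n p q a * skew_unit n q r b - skew_unit n q r b * skew_unit n p q a
       = skew_unit n p r (a * b)"
proof (rule eq_matI)
  fix i j assume "i < dim_row (skew_unit n p r (a * b))" "j < dim_col (skew_unit n p r (a * b))"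
  hence ij: "i < n" "j < n" by auto
  have "(skew_unit n p q a * skew_unit n q r b - skew_unit n q r b * skew_unit n p q a) $$ (i,j)
      = (skew_unit n p q a * skew_unit n q r b) $$ (i,j)
        - (skew_unit n q r b * skew_unit n p q a) $$ (i,j)"
    using ij by (simp del: index_mult_mat(1))
  also have "\<dots> = skew_unit n p r (a * b) $$ (i,j)"
    unfolding skew_unit_mult_index[OF assms(1,4,5) ij skew_unit_carrier]
      skew_unit_mult_index[OF assms(2,5,6) ij skew_unit_carrier]
    using assms ij by (simp add: skew_unit_index)
  finally show
    "(skew_unit n p q a * skew_unit n q r b - skew_unit n q r b * skew_unit n p q a) $$ (i,j)
      = skew_unit n p r (a * b) $$ (i,j)" .
qed simp_all

lemma skew_unit_commutator_skew_diag:
  assumes "p \<noteq> q" "p < n" "q < n"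
  shows "skew_unit n p q 1 * skew_unit n q p (\<i> / 2) - skew_unit n q p (\<i> / 2) * skew_unit n p q 1
       = skew_diag n p q"
proof (rule eq_matI)
  fix i j assume "i < dim_row (skew_diag n p q)" "j < dim_col (skew_diag n p q)"
  hence ij: "i < n" "j < n" by simp_all
  have "(skew_unit n p q 1 * skew_unit n q p (\<i> / 2)
        - skew_unit n q p (\<i> / 2) * skew_unit n p q 1) $$ (i,j)
      = (skew_unit n p q 1 * skew_unit n q p (\<i> / 2)) $$ (i,j)
        - (skew_unit n q p (\<i> / 2) * skew_unit n p q 1) $$ (i,j)"
    using ij by (simp del: index_mult_mat(1))
  also have "\<dots> = skew_diag n p q $$ (i,j)"
    unfolding skew_unit_mult_index[OF assms ij skew_unit_carrier]
      skew_unit_mult_index[OF assms(1)[symmetric] assms(3,2) ij skew_unit_carrier]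
    using assms ij by (simp add: skew_unit_index skew_diag_def mat_diag_def)
  finally show "(skew_unit n p q 1 * skew_unit n q p (\<i> / 2)
        - skew_unit n q p (\<i> / 2) * skew_unit n p q 1) $$ (i,j)
      = skew_diag n p q $$ (i,j)" .
qed simp_all
lemma skew_unit_commutator_mat_diag:
  assumes "p \<noteq> q" "p < n" "q < n" "Re (d p) = Re (d q)"
  shows "skew_unit n p q a * mat_diag n d - mat_diag n d * skew_unit n p q a
       = skew_unit n p q ((d q - d p) * a)"
proof (rule eq_matI)
  have e: "cnj (d q) - cnj (d p) = d p - d q" using assms(4) by (simp add: complex_eq_iff)
  fix i j assume "i < dim_row (skew_unit n p q ((d q - d p) * a))"
    "j < dim_col (skew_unit n p q ((d q - d p) * a))"
  hence "i < n" "j < n" by auto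
  thus "(skew_unit n p q a * mat_diag n d - mat_diag n d * skew_unit n p q a) $$ (i,j)
      = skew_unit n p q ((d q - d p) * a) $$ (i,j)"
    using assms(1) e unfolding commutator_mat_diag[OF skew_unit_carrier]
    by (cases "i = p"; cases "j = q"; cases "i = q"; cases "j = p"; simp add: skew_unit_index)
qed (simp_all add: mat_diag_def)

text \<open>The matrices \<open>su_unit\<close> span \<open>su(n)\<close> over \<open>\<real>\<close> (with \<open>su_unit n (0,0) = 0\<close>), and
  \<open>su_coords\<close> gives the coefficients of a matrix in this spanning family.\<close>
definition su_unit :: "nat \<Rightarrow> nat \<times> nat \<Rightarrow> complex mat" where
  "su_unit n = (\<lambda>(a,b). if a < b then skew_unit n a b 1
     else if b < a then skew_unit n b a \<i> else skew_diag n a 0)"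

definition su_coords :: "nat \<Rightarrow> complex mat \<Rightarrow> nat \<times> nat \<Rightarrow> real" where
  "su_coords n A = (\<lambda>(a,b). if a < n \<and> b < n
     then (if a < b then Re (A $$ (a,b)) else Im (A $$ (b,a))) else 0)"

lemma su_unit_su: "a < n \<Longrightarrow> b < n \<Longrightarrow> su_unit n (a,b) \<in> su n"
  by (auto simp: su_unit_def intro: skew_unit_su skew_diag_su)

lemma su_unit_index_offdiag:
  assumes "i < n" "j < n" "i \<noteq> j" "(a,b) \<noteq> (i,j)" "(a,b) \<noteq> (j,i)"
  shows "su_unit n (a,b) $$ (i,j) = 0"
  using assms by (auto simp: su_unit_def skew_unit_index skew_diag_def mat_diag_def)

lemma su_unit_index_diag:
  assumes "i < n" "a \<noteq> b"
  shows "su_unit n (a,b) $$ (i,i) = 0"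
  using assms by (auto simp: su_unit_def skew_unit_index)

lemma su_expansion_offdiag:
  assumes A: "A \<in> su n" and ij: "i < n" "j < n" "i \<noteq> j"
  shows "(\<Sum>p\<in>{..<n} \<times> {..<n}. of_real (su_coords n A p) * su_unit n p $$ (i,j)) = A $$ (i,j)"
proof -
  have "(\<Sum>p\<in>{..<n} \<times> {..<n}. of_real (su_coords n A p) * su_unit n p $$ (i,j))
      = of_real (su_coords n A (i,j)) * su_unit n (i,j) $$ (i,j)
        + of_real (su_coords n A (j,i)) * su_unit n (j,i) $$ (i,j)"
  proof (rule sum_eq_two)
    fix p assume "p \<in> {..<n} \<times> {..<n}" "p \<noteq> (i,j)" "p \<noteq> (j,i)"
    thus "of_real (su_coords n A p) * su_unit n p $$ (i,j) = 0"
      using su_unit_index_offdiag[OF ij] by (cases p) simp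
  qed (use ij in auto)
  also have "\<dots> = A $$ (i,j)"
  proof (cases "i < j")
    case True
    thus ?thesis using ij by (simp add: su_coords_def su_unit_def skew_unit_index complex_eq_iff)
  next
    case False
    have "A $$ (i,j) = - cnj (A $$ (j,i))" by (rule su_skew[OF A ij(1,2)])
    thus ?thesis using False ij
      by (simp add: su_coords_def su_unit_def skew_unit_index complex_eq_iff)
  qed
  finally show ?thesis .
qed

lemma su_expansion_diag:
  assumes A: "A \<in> su n" and i: "i < n"
  shows "(\<Sum>p\<in>{..<n} \<times> {..<n}. of_real (su_coords n A p) * su_unit n p $$ (i,i)) = A $$ (i,i)"
proof -
  let ?f = "\<lambda>p. of_real (su_coords n A p) * su_unit n p $$ (i,i)"
  have "sum ?f ({..<n} \<times> {..<n}) = sum ?f ((\<lambda>c. (c,c)) ` {..<n})"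
  proof (rule sum.mono_neutral_right)
    show "\<forall>p\<in>{..<n} \<times> {..<n} - (\<lambda>c. (c,c)) ` {..<n}. ?f p = 0"
    proof
      fix p assume p: "p \<in> {..<n} \<times> {..<n} - (\<lambda>c. (c,c)) ` {..<n}"
      then obtain a b where "p = (a,b)" "a \<noteq> b" by auto
      thus "?f p = 0" using su_unit_index_diag[OF i] by simp
    qed
  qed auto
  also have "\<dots> = (\<Sum>c<n. of_real (Im (A $$ (c,c))) * (\<i> * (of_bool (i = c) - of_bool (i = 0))))"
    using i by (subst sum.reindex)
      (auto simp: inj_on_def su_coords_def su_unit_def skew_diag_def mat_diag_def)
  also have "\<dots> = \<i> * of_real (Im (A $$ (i,i)))
      - of_bool (i = 0) * \<i> * of_real (Im (\<Sum>c<n. A $$ (c,c)))"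
    using i by (simp add: algebra_simps sum_subtractf sum_distrib_left[symmetric])
  also have "\<dots> = A $$ (i,i)"
    using su_trace[OF A] su_diag_Re[OF A i] by (simp add: complex_eq_iff)
  finally show ?thesis .
qed

lemma su_subset_real_closure:
  assumes zero: "0\<^sub>m n n \<in> I"
    and add: "\<And>X Y. X \<in> I \<Longrightarrow> Y \<in> I \<Longrightarrow> X + Y \<in> I"
    and scale: "\<And>c X. X \<in> I \<Longrightarrow> complex_of_real c \<cdot>\<^sub>m X \<in> I"
    and units: "\<And>a b. a < n \<Longrightarrow> b < n \<Longrightarrow> su_unit n (a,b) \<in> I"
  shows "su n \<subseteq> I"
proof
  fix A assume A: "A \<in> su n"
  define partial where
    "partial P = mat n n (\<lambda>ij. \<Sum>p\<in>P. of_real (su_coords n A p) * su_unit n p $$ ij)" for P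
  have "partial P \<in> I" if "P \<subseteq> {..<n} \<times> {..<n}" for P
  proof -
    have "finite P" using that finite_subset by blast
    thus ?thesis using that
    proof (induction P rule: finite_induct)
      case empty
      have "partial {} = 0\<^sub>m n n" by (auto simp: partial_def)
      thus ?case using zero by simp
    next
      case (insert p P)
      obtain a b where p: "p = (a,b)" "a < n" "b < n" using insert.prems by auto
      have "partial (insert p P) = of_real (su_coords n A p) \<cdot>\<^sub>m su_unit n p + partial P"
        using insert.hyps p by (intro eq_matI) (auto simp: partial_def su_unit_def)
      thus ?case using insert p by (simp add: add scale units)
    qed
  qed
  moreover have "partial ({..<n} \<times> {..<n}) = A"
  proof (rule eq_matI)
    fix i j assume "i < dim_row A" "j < dim_col A"
    hence ij: "i < n" "j < n" using su_carrier[OF A] by auto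
    show "partial ({..<n} \<times> {..<n}) $$ (i,j) = A $$ (i,j)"
      using su_expansion_offdiag[OF A ij] su_expansion_diag[OF A ij(1)] ij
      by (cases "i = j") (simp_all add: partial_def)
  qed (use su_carrier[OF A] in \<open>simp_all add: partial_def\<close>)
  ultimately show "A \<in> I" by blast
qed

section \<open>Simplicity of \<open>su(n)\<close>\<close>

locale su_ideal =
  fixes I :: "complex mat set" and n :: nat
  assumes subset_su: "I \<subseteq> su n"
    and add_mem: "X \<in> I \<Longrightarrow> Y \<in> I \<Longrightarrow> X + Y \<in> I"
    and scale_mem: "X \<in> I \<Longrightarrow> complex_of_real c \<cdot>\<^sub>m X \<in> I"
    and commutator_mem: "X \<in> I \<Longrightarrow> Y \<in> su n \<Longrightarrow> X * Y - Y * X \<in> I"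
begin

lemma carrier: "X \<in> I \<Longrightarrow> X \<in> carrier_mat n n"
  using subset_su su_carrier by blast

lemma zero_mem: assumes "X \<in> I" shows "0\<^sub>m n n \<in> I"
proof -
  have "complex_of_real 0 \<cdot>\<^sub>m X = 0\<^sub>m n n" using carrier[OF assms] by (intro eq_matI) auto
  thus ?thesis using scale_mem[OF assms, of 0] by simp
qed

lemma commutator_mem_left:
  assumes "X \<in> I" "Y \<in> su n"
  shows "Y * X - X * Y \<in> I"
proof -
  have "complex_of_real (-1) \<cdot>\<^sub>m (X * Y - Y * X) = Y * X - X * Y"
    using carrier[OF assms(1)] su_carrier[OF assms(2)] by (intro eq_matI) auto
  thus ?thesis using scale_mem[OF commutator_mem[OF assms], of "-1"] by simp
qed

lemma skew_unit_mem_any_coeff: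
  assumes mem: "skew_unit n p q a \<in> I" and a: "a \<noteq> 0" and pq: "p \<noteq> q" "p < n" "q < n"
  shows "skew_unit n p q b \<in> I"
proof -
  have "skew_unit n p q a * skew_diag n p q - skew_diag n p q * skew_unit n p q a
      = skew_unit n p q (- 2 * \<i> * a)"
    using pq skew_unit_commutator_mat_diag[OF pq, of "\<lambda>k. \<i> * (of_bool (k = p) - of_bool (k = q))" a]
    by (simp add: skew_diag_def)
  hence rotated: "skew_unit n p q (- 2 * \<i> * a) \<in> I"
    using commutator_mem[OF mem skew_diag_su[OF pq(2,3)]] by simp
  \<comment> \<open>\<open>a\<close> and \<open>-2\<i>a\<close> span \<open>\<complex>\<close> over \<open>\<real>\<close>\<close>
  define u where "u = Re (b / a)"
  define w where "w = Im (b / a)"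
  have "complex_of_real u * a + complex_of_real (- w / 2) * (- 2 * \<i> * a)
      = (complex_of_real u + \<i> * complex_of_real w) * a"
    by (simp add: algebra_simps)
  also have "complex_of_real u + \<i> * complex_of_real w = b / a"
    unfolding u_def w_def by (simp add: complex_eq_iff)
  finally have "b = complex_of_real u * a + complex_of_real (- w / 2) * (- 2 * \<i> * a)"
    using a by simp
  hence "skew_unit n p q b
      = of_real u \<cdot>\<^sub>m skew_unit n p q a + of_real (- w / 2) \<cdot>\<^sub>m skew_unit n p q (- 2 * \<i> * a)"
    by (metis skew_unit_add skew_unit_scale)
  thus ?thesis by (simp only:) (intro add_mem scale_mem mem rotated)
qed

lemma skew_units_mem_swap:
  assumes "\<And>c. skew_unit n p q c \<in> I" "p \<noteq> q"
  shows "skew_unit n q p c \<in> I"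
  using assms(1)[of "- cnj c"] by (simp only: skew_unit_swap[OF assms(2)])

lemma skew_units_mem_chain:
  assumes "\<And>c. skew_unit n p q c \<in> I" "p \<noteq> q" "q \<noteq> r" "p \<noteq> r" "p < n" "q < n" "r < n"
  shows "skew_unit n p r c \<in> I"
  using commutator_mem[OF assms(1) skew_unit_su[OF assms(3,6,7)], of 1 c]
  by (simp only: skew_unit_commutator_chain[OF assms(2-7)] mult_1)

lemma skew_units_mem_all_pairs:
  assumes pq: "\<And>c. skew_unit n p q c \<in> I" "p \<noteq> q" "p < n" "q < n"
    and ab: "a \<noteq> b" "a < n" "b < n"
  shows "skew_unit n a b c \<in> I"
proof -
  have from_p: "skew_unit n p x c \<in> I" if "x < n" "x \<noteq> p" for x c
  proof (cases "x = q")
    case False thus ?thesis using skew_units_mem_chain[OF pq(1,2)] pq(3,4) that by auto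
  qed (use pq(1) in simp)
  show ?thesis
  proof (cases "a = p")
    case True thus ?thesis using from_p ab by simp
  next
    case a: False
    have to_p: "skew_unit n a p c \<in> I" for c
      using skew_units_mem_swap[of p a] from_p[of a] a ab(2) by blast
    show ?thesis
    proof (cases "b = p")
      case False thus ?thesis using skew_units_mem_chain[OF to_p] a ab pq(3) by auto
    qed (use to_p in simp)
  qed
qed

lemma su_subset_if_all_skew_units:
  assumes units: "\<And>a b c. a \<noteq> b \<Longrightarrow> a < n \<Longrightarrow> b < n \<Longrightarrow> skew_unit n a b c \<in> I"
    and nonempty: "X \<in> I"
  shows "su n \<subseteq> I"
proof (rule su_subset_real_closure)
  have diag: "skew_diag n a b \<in> I" if "a \<noteq> b" "a < n" "b < n" for a b
    using commutator_mem[OF units[of a b 1, OF that] skew_unit_su[of b a n "\<i> / 2"]] that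
      skew_unit_commutator_skew_diag[OF that] by auto
  show "su_unit n (a,b) \<in> I" if "a < n" "b < n" for a b
    using that units diag zero_mem[OF nonempty]
    by (cases "a = b"; cases "a = 0") (auto simp: su_unit_def skew_diag_self)
qed (use zero_mem[OF nonempty] add_mem scale_mem in auto)

text \<open>Taking the commutator twice with \<open>\<i>\<close> times the projection onto \<open>e\<^sub>p\<close> (made trace free)
  keeps exactly the entries of row \<open>p\<close> and column \<open>p\<close> other than \<open>(p,p)\<close>.\<close>
lemma cross_mask_mem:
  assumes X: "X \<in> I" and p: "p < n"
  shows "mat n n (\<lambda>(i,j). if (i = p) \<noteq> (j = p) then X $$ (i,j) else 0) \<in> I"
proof -
  define d where "d k = \<i> * (of_bool (k = p) - 1 / of_nat n)" for k
  have D: "mat_diag n d \<in> su n"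
    using p by (intro mat_diag_su) (simp_all add: d_def sum_distrib_left[symmetric] sum_subtractf)
  have Xc: "X \<in> carrier_mat n n" using carrier[OF X] .
  have dd: "d j - d i = \<i> * (of_bool (j = p) - of_bool (i = p))" for i j
    by (simp add: d_def algebra_simps)
  let ?Y = "X * mat_diag n d - mat_diag n d * X"
  have Yc: "?Y \<in> carrier_mat n n" using Xc
    by (intro minus_carrier_mat mult_carrier_mat) (simp_all add: mat_diag_def)
  have Y: "?Y = mat n n (\<lambda>(i,j). (d j - d i) * X $$ (i,j))"
    by (rule commutator_mat_diag[OF Xc])
  have "complex_of_real (-1) \<cdot>\<^sub>m (?Y * mat_diag n d - mat_diag n d * ?Y)
      = mat n n (\<lambda>(i,j). if (i = p) \<noteq> (j = p) then X $$ (i,j) else 0)"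
    unfolding commutator_mat_diag[OF Yc]
    by (rule eq_matI) (auto simp: Y dd)
  moreover have "?Y * mat_diag n d - mat_diag n d * ?Y \<in> I"
    by (intro commutator_mem X D)
  ultimately show ?thesis using scale_mem by metis
qed

lemma skew_unit_of_entry_mem:
  assumes X: "X \<in> I" and pq: "p \<noteq> q" "p < n" "q < n"
  shows "skew_unit n p q (X $$ (p,q)) \<in> I"
proof -
  let ?M = "mat n n (\<lambda>(i,j). if (i = p) \<noteq> (j = p) then X $$ (i,j) else 0)"
  have "?M \<in> I" by (rule cross_mask_mem[OF X pq(2)])
  hence "mat n n (\<lambda>(i,j). if (i = q) \<noteq> (j = q) then ?M $$ (i,j) else 0) \<in> I"
    by (rule cross_mask_mem[OF _ pq(3)])
  moreover have "mat n n (\<lambda>(i,j). if (i = q) \<noteq> (j = q) then ?M $$ (i,j) else 0)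
      = skew_unit n p q (X $$ (p,q))"
  proof (rule eq_matI)
    have qp: "X $$ (q,p) = - cnj (X $$ (p,q))" using subset_su X pq su_skew by blast
    fix i j assume "i < dim_row (skew_unit n p q (X $$ (p,q)))"
      "j < dim_col (skew_unit n p q (X $$ (p,q)))"
    hence "i < n" "j < n" by auto
    thus "mat n n (\<lambda>(i,j). if (i = q) \<noteq> (j = q) then ?M $$ (i,j) else 0) $$ (i,j)
        = skew_unit n p q (X $$ (p,q)) $$ (i,j)"
      using pq(1) qp
      by (cases "i = p"; cases "j = q"; cases "i = q"; cases "j = p"; simp add: skew_unit_index)
  qed simp_all
  ultimately show ?thesis by simp
qed

lemma skew_unit_of_diag_mem:
  assumes X: "X \<in> I" and diag: "\<And>i j. i < n \<Longrightarrow> j < n \<Longrightarrow> i \<noteq> j \<Longrightarrow> X $$ (i,j) = 0"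
    and ab: "a \<noteq> b" "a < n" "b < n"
  shows "skew_unit n a b (X $$ (b,b) - X $$ (a,a)) \<in> I"
proof -
  have "X = mat_diag n (\<lambda>k. X $$ (k,k))"
    using carrier[OF X] diag by (intro eq_matI) (auto simp: mat_diag_def)
  moreover have "Re (X $$ (a,a)) = Re (X $$ (b,b))"
    using su_diag_Re subset_su X ab by auto
  ultimately have "skew_unit n a b 1 * X - X * skew_unit n a b 1
      = skew_unit n a b (X $$ (b,b) - X $$ (a,a))"
    using skew_unit_commutator_mat_diag[OF ab, of "\<lambda>k. X $$ (k,k)" 1] by simp
  thus ?thesis using commutator_mem_left[OF X skew_unit_su[OF ab, of 1]] by simp
qed

lemma nonzero_mem_skew_unit:
  assumes X: "X \<in> I" and nz: "X \<noteq> 0\<^sub>m n n"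
  obtains p q a where "p \<noteq> q" "p < n" "q < n" "a \<noteq> 0" "skew_unit n p q a \<in> I"
proof (cases "\<exists>p<n. \<exists>q<n. p \<noteq> q \<and> X $$ (p,q) \<noteq> 0")
  case True
  then obtain p q where "p < n" "q < n" "p \<noteq> q" "X $$ (p,q) \<noteq> 0" by blast
  thus ?thesis using that skew_unit_of_entry_mem[OF X] by blast
next
  case False
  hence diag: "X $$ (i,j) = 0" if "i < n" "j < n" "i \<noteq> j" for i j using that by blast
  have "\<exists>a<n. \<exists>b<n. X $$ (a,a) \<noteq> X $$ (b,b)"
  proof (rule ccontr)
    assume "\<not> ?thesis"
    hence const: "X $$ (i,i) = X $$ (k,k)" if "i < n" "k < n" for i k using that by blast
    have "X = 0\<^sub>m n n"
    proof (rule eq_matI)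
      fix i j assume "i < dim_row (0\<^sub>m n n :: complex mat)" "j < dim_col (0\<^sub>m n n :: complex mat)"
      hence ij: "i < n" "j < n" by auto
      have "(\<Sum>k<n. X $$ (k,k)) = of_nat n * X $$ (i,i)"
        by (subst sum.cong[OF refl, of _ _ "\<lambda>k. X $$ (i,i)"]) (simp_all add: const[OF _ ij(1)])
      hence "of_nat n * X $$ (i,i) = (\<Sum>k<n. X $$ (k,k))" by simp
      also have "\<dots> = 0" using su_trace subset_su X by blast
      finally have "X $$ (i,i) = 0" using ij by simp
      thus "X $$ (i,j) = 0\<^sub>m n n $$ (i,j)" using diag ij by (cases "i = j") auto
    qed (use carrier[OF X] in auto)
    thus False using nz by blast
  qed
  then obtain a b where ab: "a < n" "b < n" "X $$ (a,a) \<noteq> X $$ (b,b)" by blast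
  hence "a \<noteq> b" "X $$ (b,b) - X $$ (a,a) \<noteq> 0" by auto
  thus ?thesis using that skew_unit_of_diag_mem[OF X diag] ab by blast
qed

theorem su_subset_if_nonzero:
  assumes "X \<in> I" "X \<noteq> 0\<^sub>m n n"
  shows "su n \<subseteq> I"
proof -
  obtain p q a where pq: "p \<noteq> q" "p < n" "q < n" and "a \<noteq> 0" "skew_unit n p q a \<in> I"
    using nonzero_mem_skew_unit[OF assms] .
  hence "skew_unit n p q c \<in> I" for c using skew_unit_mem_any_coeff by blast
  hence "skew_unit n a' b' c \<in> I" if "a' \<noteq> b'" "a' < n" "b' < n" for a' b' c
    using skew_units_mem_all_pairs[OF _ pq that] by blast
  thus ?thesis using su_subset_if_all_skew_units assms(1) by blast
qed

end

section \<open>Real dimension\<close>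

interpretation coords: vector_space "\<lambda>(c::real) (v::nat \<times> nat \<Rightarrow> real) x. c * v x"
  by unfold_locales (auto simp: fun_eq_iff algebra_simps)

lemma sum_fun_apply: "(\<Sum>x\<in>A. f x) y = (\<Sum>x\<in>A. f x y)"
  by (induction A rule: infinite_finite_induct) auto

lemma coords_independent_indicators:
  "coords.independent ((\<lambda>p. indicat_real {p}) ` (P :: (nat \<times> nat) set))"
  unfolding coords.independent_explicit_finite_subsets
proof (intro allI impI ballI)
  fix S :: "(nat \<times> nat \<Rightarrow> real) set" and u v
  assume S: "S \<subseteq> (\<lambda>p. indicat_real {p}) ` P" "finite S" and v: "v \<in> S"
    and comb: "(\<Sum>w\<in>S. (\<lambda>x. u w * w x)) = 0"
  obtain p :: "nat \<times> nat" where p: "v = indicat_real {p}" using S v by blast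
  have "0 = (\<Sum>w\<in>S. (\<lambda>x. u w * w x)) p" using comb by simp
  also have "\<dots> = (\<Sum>w\<in>S. u w * w p)" by (rule sum_fun_apply)
  also have "\<dots> = u v * v p"
  proof (rule sum_eq_single[OF S(2) v])
    fix w assume "w \<in> S" "w \<noteq> v"
    then obtain q where "w = indicat_real {q}" "q \<noteq> p" using S p by blast
    thus "u w * w p = 0" by simp
  qed
  finally show "u v = 0" using p by simp
qed

lemma su_coords_add:
  "A \<in> carrier_mat n n \<Longrightarrow> B \<in> carrier_mat n n \<Longrightarrow> su_coords n (A + B) = su_coords n A + su_coords n B"
  by (rule ext) (auto simp: su_coords_def)

lemma su_coords_scale:
  "A \<in> carrier_mat n n \<Longrightarrow> su_coords n (complex_of_real c \<cdot>\<^sub>m A) = (\<lambda>x. c * su_coords n A x)"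
  by (rule ext) (auto simp: su_coords_def)

lemma su_coords_zero: "su_coords n (0\<^sub>m n n) = 0"
  by (rule ext) (auto simp: su_coords_def)

lemma su_coords_su_unit:
  assumes "a \<noteq> b" "a < n" "b < n"
  shows "su_coords n (su_unit n (a,b)) = indicat_real {(a,b)}"
proof (rule ext)
  fix x :: "nat \<times> nat"
  obtain c e where x: "x = (c,e)" by (cases x)
  show "su_coords n (su_unit n (a,b)) x = indicat_real {(a,b)} x"
    using assms unfolding x
    by (cases "a < b"; cases "c < e"; cases "c < n \<and> e < n")
       (auto simp: su_coords_def su_unit_def skew_unit_index split: split_indicator)
qed

lemma card_offdiag: "card {(a,b) \<in> {..<n} \<times> {..<n}. a \<noteq> b} = n * n - n"
proof -
  have "{(a,b) \<in> {..<n} \<times> {..<n}. a \<noteq> b} = {..<n} \<times> {..<n} - (\<lambda>c. (c,c)) ` {..<n}" by auto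
  moreover have "card ((\<lambda>c. (c,c)) ` {..<n}) = n" by (subst card_image) (auto simp: inj_on_def)
  moreover have "(\<lambda>c. (c,c)) ` {..<n} \<subseteq> {..<n} \<times> {..<n}" by auto
  ultimately show ?thesis by (simp add: card_Diff_subset card_cartesian_product)
qed

lemma su_coords_linear_image_in_span:
  fixes \<phi> :: "complex mat \<Rightarrow> complex mat"
  assumes into: "\<And>X. X \<in> su m \<Longrightarrow> \<phi> X \<in> carrier_mat N N"
    and add: "\<And>X Y. X \<in> su m \<Longrightarrow> Y \<in> su m \<Longrightarrow> \<phi> (X + Y) = \<phi> X + \<phi> Y"
    and scale: "\<And>c X. X \<in> su m \<Longrightarrow> \<phi> (complex_of_real c \<cdot>\<^sub>m X) = complex_of_real c \<cdot>\<^sub>m \<phi> X"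
    and Z: "Z \<in> su m"
  shows "su_coords N (\<phi> Z) \<in> coords.span ((\<lambda>Y. su_coords N (\<phi> Y)) ` su_unit m ` ({..<m} \<times> {..<m}))"
proof -
  define g where "g Y = su_coords N (\<phi> Y)" for Y
  define B where "B = g ` su_unit m ` ({..<m} \<times> {..<m})"
  have "\<phi> (0\<^sub>m m m) = complex_of_real 0 \<cdot>\<^sub>m \<phi> (0\<^sub>m m m)"
    using scale[OF zero_mem_su, of 0] by simp
  also have "\<dots> = 0\<^sub>m N N" using into[OF zero_mem_su] by (intro eq_matI) auto
  finally have g0: "g (0\<^sub>m m m) = 0" unfolding g_def by (simp add: su_coords_zero)
  let ?I = "{X \<in> su m. g X \<in> coords.span B}"
  have "su m \<subseteq> ?I"
  proof (rule su_subset_real_closure)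
    show "0\<^sub>m m m \<in> ?I" using g0 zero_mem_su coords.span_zero by simp
  next
    fix X Y assume "X \<in> ?I" "Y \<in> ?I"
    hence X: "X \<in> su m" "g X \<in> coords.span B" and Y: "Y \<in> su m" "g Y \<in> coords.span B" by auto
    have "g (X + Y) = g X + g Y"
      unfolding g_def add[OF X(1) Y(1)] by (rule su_coords_add[OF into[OF X(1)] into[OF Y(1)]])
    thus "X + Y \<in> ?I" using su_add[OF X(1) Y(1)] coords.span_add[OF X(2) Y(2)] by simp
  next
    fix c X assume "X \<in> ?I"
    hence X: "X \<in> su m" "g X \<in> coords.span B" by auto
    have "g (complex_of_real c \<cdot>\<^sub>m X) = (\<lambda>x. c * g X x)"
      unfolding g_def scale[OF X(1)] by (rule su_coords_scale[OF into[OF X(1)]])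
    thus "complex_of_real c \<cdot>\<^sub>m X \<in> ?I" using su_scale[OF X(1)] coords.span_scale[OF X(2)] by simp
  next
    fix a b assume "a < m" "b < m"
    hence "su_unit m (a,b) \<in> su m" "g (su_unit m (a,b)) \<in> B" unfolding B_def
      by (auto intro: su_unit_su)
    thus "su_unit m (a,b) \<in> ?I" using coords.span_base by blast
  qed
  thus ?thesis using Z unfolding g_def B_def by blast
qed

text \<open>Real dimension count: the image of \<open>su(m)\<close> is spanned by the images of the \<open>m\<^sup>2\<close> vectors
  \<open>su_unit\<close>, whereas \<open>su(N)\<close> contains the \<open>N\<^sup>2 - N\<close> independent off-diagonal ones.\<close>
theorem no_real_linear_surj_su:
  fixes \<phi> :: "complex mat \<Rightarrow> complex mat"
  assumes mN: "m < N" and N: "2 \<le> N"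
    and into: "\<And>X. X \<in> su m \<Longrightarrow> \<phi> X \<in> carrier_mat N N"
    and add: "\<And>X Y. X \<in> su m \<Longrightarrow> Y \<in> su m \<Longrightarrow> \<phi> (X + Y) = \<phi> X + \<phi> Y"
    and scale: "\<And>c X. X \<in> su m \<Longrightarrow> \<phi> (complex_of_real c \<cdot>\<^sub>m X) = complex_of_real c \<cdot>\<^sub>m \<phi> X"
    and onto: "su N \<subseteq> \<phi> ` su m"
  shows False
proof -
  define g where "g X = su_coords N (\<phi> X)" for X
  define B where "B = g ` su_unit m ` ({..<m} \<times> {..<m})"
  define Off where "Off = {(a,b) \<in> {..<N} \<times> {..<N}. a \<noteq> b}"
  have finB: "finite B" unfolding B_def by simp
  have span: "g X \<in> coords.span B" if "X \<in> su m" for X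
    unfolding g_def B_def by (rule su_coords_linear_image_in_span[OF into add scale that])
  have "(\<lambda>p. indicat_real {p}) ` Off \<subseteq> coords.span B"
  proof
    fix t :: "nat \<times> nat \<Rightarrow> real" assume "t \<in> (\<lambda>p. indicat_real {p}) ` Off"
    then obtain a b where ab: "a \<noteq> b" "a < N" "b < N" and t: "t = indicat_real {(a,b)}"
      unfolding Off_def by auto
    have "su_unit N (a,b) \<in> \<phi> ` su m" using onto su_unit_su[OF ab(2,3)] by (rule subsetD)
    then obtain X where X: "X \<in> su m" "\<phi> X = su_unit N (a,b)" by (metis imageE)
    have "t = g X" unfolding g_def X(2) su_coords_su_unit[OF ab] t ..
    thus "t \<in> coords.span B" using span[OF X(1)] by simp
  qed
  hence "card ((\<lambda>p. indicat_real {p}) ` Off) \<le> card B"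
    using coords.independent_span_bound[OF finB coords_independent_indicators[of Off]] by simp
  moreover have "inj_on (\<lambda>p. indicat_real {p}) Off"
  proof (rule inj_onI)
    fix p q :: "nat \<times> nat" assume "indicat_real {p} = indicat_real {q}"
    from fun_cong[OF this, of p] show "p = q" by (simp add: indicator_eq_1_iff)
  qed
  ultimately have "card Off \<le> card B" by (simp add: card_image)
  also have "card B \<le> card (su_unit m ` ({..<m} \<times> {..<m}))"
    unfolding B_def by (rule card_image_le) simp
  also have "\<dots> \<le> card ({..<m} \<times> {..<m})" by (rule card_image_le) simp
  finally have "N * N - N \<le> m * m"
    using card_offdiag[of N] unfolding Off_def by (simp add: card_cartesian_product)
  moreover obtain k where k: "N = Suc k" "m \<le> k" using mN by (cases N) auto
  ultimately have "k * k + k \<le> k * k" using mult_le_mono[OF k(2) k(2)] by simp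
  thus False using N k(1) by simp
qed

section \<open>Block diagonal Lie algebras\<close>

definition block_su_on :: "(nat \<Rightarrow> nat) \<Rightarrow> nat set \<Rightarrow> (nat \<Rightarrow> complex mat) set" where
  "block_su_on n S = {A. (\<forall>j\<in>S. A j \<in> su (n j)) \<and> (\<forall>j. j \<notin> S \<longrightarrow> A j = 0\<^sub>m 0 0)}"

definition block_zero :: "(nat \<Rightarrow> nat) \<Rightarrow> nat set \<Rightarrow> nat \<Rightarrow> complex mat" where
  "block_zero n S = (\<lambda>k. if k \<in> S then 0\<^sub>m (n k) (n k) else 0\<^sub>m 0 0)"

definition block_single :: "(nat \<Rightarrow> nat) \<Rightarrow> nat set \<Rightarrow> nat \<Rightarrow> complex mat \<Rightarrow> nat \<Rightarrow> complex mat" where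
  "block_single n S j X = (block_zero n S)(j := X)"

definition block_restrict :: "nat set \<Rightarrow> (nat \<Rightarrow> complex mat) \<Rightarrow> nat \<Rightarrow> complex mat" where
  "block_restrict T A = (\<lambda>k. if k \<in> T then A k else 0\<^sub>m 0 0)"

definition weakly_controllable :: "(nat \<Rightarrow> nat) \<Rightarrow> nat set \<Rightarrow> (nat \<Rightarrow> complex mat) set \<Rightarrow> bool" where
  "weakly_controllable n S R \<longleftrightarrow> (\<forall>j\<in>S. \<forall>Z\<in>su (n j). \<exists>A\<in>R. A j = Z)"

lemma block_su_eq_block_su_on: "block_su n r = block_su_on n {..<r}"
  unfolding block_su_def block_su_on_def by auto

lemma block_su_on_su: "A \<in> block_su_on n S \<Longrightarrow> j \<in> S \<Longrightarrow> A j \<in> su (n j)"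
  and block_su_on_outside: "A \<in> block_su_on n S \<Longrightarrow> j \<notin> S \<Longrightarrow> A j = 0\<^sub>m 0 0"
  unfolding block_su_on_def by blast+

lemma block_su_on_carrier: "A \<in> block_su_on n S \<Longrightarrow> j \<in> S \<Longrightarrow> A j \<in> carrier_mat (n j) (n j)"
  using block_su_on_su su_carrier by blast

lemma block_single_mem_block_su_on:
  "j \<in> S \<Longrightarrow> X \<in> su (n j) \<Longrightarrow> block_single n S j X \<in> block_su_on n S"
  by (auto simp: block_su_on_def block_single_def block_zero_def zero_mem_su)

lemma block_restrict_mem: "A \<in> block_su_on n S \<Longrightarrow> T \<subseteq> S \<Longrightarrow> block_restrict T A \<in> block_su_on n T"
  unfolding block_su_on_def block_restrict_def by auto

lemma zero_mat_0_0_ops: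
  "0\<^sub>m 0 0 + (0\<^sub>m 0 0 :: complex mat) = 0\<^sub>m 0 0"
  "c \<cdot>\<^sub>m (0\<^sub>m 0 0 :: complex mat) = 0\<^sub>m 0 0"
  "0\<^sub>m 0 0 * 0\<^sub>m 0 0 - 0\<^sub>m 0 0 * (0\<^sub>m 0 0 :: complex mat) = 0\<^sub>m 0 0"
  by auto

lemma commutator_zero_left:
    "(A :: complex mat) \<in> carrier_mat m m \<Longrightarrow> 0\<^sub>m m m * A - A * 0\<^sub>m m m = 0\<^sub>m m m"
  and commutator_zero_right:
    "(A :: complex mat) \<in> carrier_mat m m \<Longrightarrow> A * 0\<^sub>m m m - 0\<^sub>m m m * A = 0\<^sub>m m m"
  by auto

lemma mat_add_neg_self: "(A :: complex mat) \<in> carrier_mat k l \<Longrightarrow> A + (-1) \<cdot>\<^sub>m A = 0\<^sub>m k l"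
  by auto

lemma mat_eq_if_add_neg_eq_zero:
  assumes "(A :: complex mat) \<in> carrier_mat k l" "B \<in> carrier_mat k l" "A + (-1) \<cdot>\<^sub>m B = 0\<^sub>m k l"
  shows "A = B"
proof (rule eq_matI)
  fix i j assume "i < dim_row B" "j < dim_col B"
  hence "i < k" "j < l" using assms by auto
  thus "A $$ (i,j) = B $$ (i,j)" using arg_cong[OF assms(3), of "\<lambda>M. M $$ (i,j)"] assms(1,2) by simp
qed (use assms in auto)

lemma real_lie_subalgebra_add: "real_lie_subalgebra R \<Longrightarrow> A \<in> R \<Longrightarrow> B \<in> R \<Longrightarrow> bd_add A B \<in> R"
  and real_lie_subalgebra_scale: "real_lie_subalgebra R \<Longrightarrow> A \<in> R \<Longrightarrow> bd_scale c A \<in> R"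
  and real_lie_subalgebra_bracket:
    "real_lie_subalgebra R \<Longrightarrow> A \<in> R \<Longrightarrow> B \<in> R \<Longrightarrow> bd_bracket A B \<in> R"
  and real_lie_subalgebra_nonempty: "real_lie_subalgebra R \<Longrightarrow> \<exists>A. A \<in> R"
  unfolding real_lie_subalgebra_def by blast+

lemma real_lie_subalgebra_restrict:
  assumes lie: "real_lie_subalgebra R"
  shows "real_lie_subalgebra (block_restrict T ` R)"
  unfolding real_lie_subalgebra_def
proof (intro conjI ballI allI)
  show "block_restrict T ` R \<noteq> {}" using real_lie_subalgebra_nonempty[OF lie] by blast
next
  fix A B assume "A \<in> block_restrict T ` R" "B \<in> block_restrict T ` R"
  then obtain A' B' where AB: "A' \<in> R" "B' \<in> R" "A = block_restrict T A'" "B = block_restrict T B'"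
    by blast
  have "bd_add A B = block_restrict T (bd_add A' B')"
    unfolding AB by (rule ext) (simp add: bd_add_def block_restrict_def zero_mat_0_0_ops)
  thus "bd_add A B \<in> block_restrict T ` R" using real_lie_subalgebra_add[OF lie AB(1,2)] by blast
  have "bd_bracket A B = block_restrict T (bd_bracket A' B')"
    unfolding AB by (rule ext) (simp add: bd_bracket_def block_restrict_def zero_mat_0_0_ops)
  thus "bd_bracket A B \<in> block_restrict T ` R" using real_lie_subalgebra_bracket[OF lie AB(1,2)]
    by blast
next
  fix c A assume "A \<in> block_restrict T ` R"
  then obtain A' where A: "A' \<in> R" "A = block_restrict T A'" by blast
  have "bd_scale c A = block_restrict T (bd_scale c A')"
    unfolding A by (rule ext) (simp add: bd_scale_def block_restrict_def zero_mat_0_0_ops)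
  thus "bd_scale c A \<in> block_restrict T ` R" using real_lie_subalgebra_scale[OF lie A(1)] by blast
qed

lemma weakly_controllable_restrict:
  "weakly_controllable n S R \<Longrightarrow> T \<subseteq> S \<Longrightarrow> weakly_controllable n T (block_restrict T ` R)"
  unfolding weakly_controllable_def block_restrict_def by force

locale block_lie_subalgebra =
  fixes n :: "nat \<Rightarrow> nat" and S :: "nat set" and R :: "(nat \<Rightarrow> complex mat) set"
  assumes subset_block_su_on: "R \<subseteq> block_su_on n S"
    and lie: "real_lie_subalgebra R"
begin

lemma carrier: "A \<in> R \<Longrightarrow> j \<in> S \<Longrightarrow> A j \<in> carrier_mat (n j) (n j)"
  using subset_block_su_on block_su_on_carrier by blast

lemma outside: "A \<in> R \<Longrightarrow> j \<notin> S \<Longrightarrow> A j = 0\<^sub>m 0 0"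
  using subset_block_su_on block_su_on_outside by blast

lemma block_zero_mem: "block_zero n S \<in> R"
proof -
  obtain A where A: "A \<in> R" using real_lie_subalgebra_nonempty[OF lie] by blast
  have "bd_scale 0 A = block_zero n S"
  proof (rule ext)
    fix k show "bd_scale 0 A k = block_zero n S k"
      using carrier[OF A, of k] outside[OF A, of k]
      by (cases "k \<in> S") (auto simp: bd_scale_def block_zero_def)
  qed
  thus ?thesis using real_lie_subalgebra_scale[OF lie A, of 0] by simp
qed

lemma diff_mem:
  assumes "A \<in> R" "B \<in> R"
  shows "(\<lambda>k. A k + (-1) \<cdot>\<^sub>m B k) \<in> R"
  using real_lie_subalgebra_add[OF lie assms(1) real_lie_subalgebra_scale[OF lie assms(2), of "-1"]]
  by (simp add: bd_add_def bd_scale_def)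

lemma block_single_add:
  "j \<in> S \<Longrightarrow> bd_add (block_single n S j X) (block_single n S j Y) = block_single n S j (X + Y)"
  by (rule ext) (auto simp: bd_add_def block_single_def block_zero_def zero_mat_0_0_ops)

lemma block_single_scale: "bd_scale c (block_single n S j X) = block_single n S j (of_real c \<cdot>\<^sub>m X)"
  by (rule ext) (auto simp: bd_scale_def block_single_def block_zero_def zero_mat_0_0_ops)

lemma block_single_bracket:
  assumes "C \<in> R"
  shows "bd_bracket (block_single n S j X) C = block_single n S j (X * C j - C j * X)"
proof (rule ext)
  fix k show "bd_bracket (block_single n S j X) C k = block_single n S j (X * C j - C j * X) k"
    using carrier[OF assms, of k] outside[OF assms, of k] commutator_zero_left
    by (cases "k = j"; cases "k \<in> S")
      (auto simp: bd_bracket_def block_single_def block_zero_def zero_mat_0_0_ops)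
qed

lemma block_single_su: "block_single n S j X \<in> R \<Longrightarrow> j \<in> S \<Longrightarrow> X \<in> su (n j)"
  using subset_block_su_on block_su_on_su[of "block_single n S j X" n S j]
  by (auto simp: block_single_def)

lemma eq_block_su_on_if_block_singles:
  assumes fin: "finite S" and singles: "\<And>j X. j \<in> S \<Longrightarrow> X \<in> su (n j) \<Longrightarrow> block_single n S j X \<in> R"
  shows "R = block_su_on n S"
proof
  show "block_su_on n S \<subseteq> R"
  proof
    fix B assume B: "B \<in> block_su_on n S"
    define partial where "partial T = (\<lambda>k. if k \<in> T then B k else block_zero n S k)" for T
    have "partial T \<in> R" if "T \<subseteq> S" for T
    proof -
      have "finite T" using fin that finite_subset by blast
      thus ?thesis using that
      proof (induction T rule: finite_induct)
        case empty
        thus ?case using block_zero_mem by (simp add: partial_def)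
      next
        case (insert t T)
        have t: "t \<in> S" using insert by blast
        have "bd_add (partial T) (block_single n S t (B t)) = partial (insert t T)"
        proof (rule ext)
          fix k
          show "bd_add (partial T) (block_single n S t (B t)) k = partial (insert t T) k"
            using block_su_on_carrier[OF B, of k] block_su_on_carrier[OF B t]
              block_su_on_outside[OF B, of k]
              insert(2,4) t
            by (cases "k = t"; cases "k \<in> T"; cases "k \<in> S")
               (auto simp: bd_add_def partial_def block_single_def block_zero_def zero_mat_0_0_ops)
        qed
        moreover have "block_single n S t (B t) \<in> R" by (rule singles[OF t block_su_on_su[OF B t]])
        ultimately show ?case using insert real_lie_subalgebra_add[OF lie] by (metis insert_subset)
      qed
    qed
    moreover have "partial S = B"
      using block_su_on_outside[OF B] by (auto simp: partial_def block_zero_def)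
    ultimately show "B \<in> R" by blast
  qed
qed (rule subset_block_su_on)

lemma block_ideal:
  assumes j: "j \<in> S" and wc: "weakly_controllable n S R"
  shows "su_ideal {X. block_single n S j X \<in> R} (n j)"
proof
  show "{X. block_single n S j X \<in> R} \<subseteq> su (n j)" using block_single_su j by blast
next
  fix X Y assume "X \<in> {X. block_single n S j X \<in> R}" "Y \<in> {X. block_single n S j X \<in> R}"
  thus "X + Y \<in> {X. block_single n S j X \<in> R}"
    using real_lie_subalgebra_add[OF lie] block_single_add[OF j] by force
next
  fix c X assume "X \<in> {X. block_single n S j X \<in> R}"
  thus "of_real c \<cdot>\<^sub>m X \<in> {X. block_single n S j X \<in> R}"
    using real_lie_subalgebra_scale[OF lie] block_single_scale by force
next
  fix X Y assume X: "X \<in> {X. block_single n S j X \<in> R}" and Y: "Y \<in> su (n j)"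
  obtain C where C: "C \<in> R" "C j = Y" using wc j Y unfolding weakly_controllable_def by blast
  show "X * Y - Y * X \<in> {X. block_single n S j X \<in> R}"
    using real_lie_subalgebra_bracket[OF lie _ C(1), of "block_single n S j X"] X C
    by (simp add: block_single_bracket)
qed

lemma block_singles_mem_if_nonzero:
  assumes j: "j \<in> S" and wc: "weakly_controllable n S R"
    and X0: "block_single n S j X0 \<in> R" "X0 \<noteq> 0\<^sub>m (n j) (n j)" and X: "X \<in> su (n j)"
  shows "block_single n S j X \<in> R"
proof -
  interpret su_ideal "{X. block_single n S j X \<in> R}" "n j" by (rule block_ideal[OF j wc])
  show ?thesis using su_subset_if_nonzero[of X0] X0 X by blast
qed

lemma block_singles_mem_small:
  assumes "j \<in> S" "n j \<le> 1" "X \<in> su (n j)"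
  shows "block_single n S j X \<in> R"
proof -
  have "block_single n S j X = block_zero n S"
    using assms su_le_1[OF assms(2)] by (auto simp: block_single_def block_zero_def)
  thus ?thesis using block_zero_mem by simp
qed

end

context block_lie_subalgebra
begin

lemma one_block_mem:
  assumes S: "S = {j}" and wc: "weakly_controllable n S R" and X: "X \<in> su (n j)"
  shows "block_single n S j X \<in> R"
proof -
  obtain A where A: "A \<in> R" "A j = X" using wc X S unfolding weakly_controllable_def by blast
  have "A = block_single n S j X"
    using A outside[OF A(1)] S by (auto simp: block_single_def block_zero_def)
  thus ?thesis using A by simp
qed

lemma two_blocks_determined:
  assumes S: "S = {a,b}" "a \<noteq> b"
    and trivial: "\<And>Y. block_single n S a Y \<in> R \<Longrightarrow> Y = 0\<^sub>m (n a) (n a)"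
    and A: "A \<in> R" "A' \<in> R" "A b = A' b"
  shows "A a = A' a"
proof -
  have "(\<lambda>k. A k + (-1) \<cdot>\<^sub>m A' k) = block_single n S a (A a + (-1) \<cdot>\<^sub>m A' a)"
  proof (rule ext)
    fix k show "A k + (-1) \<cdot>\<^sub>m A' k = block_single n S a (A a + (-1) \<cdot>\<^sub>m A' a) k"
      using S A(3) mat_add_neg_self[OF carrier[OF A(2), of b]]
        outside[OF A(1), of k] outside[OF A(2), of k]
      by (cases "k = a"; cases "k = b")
        (auto simp: block_single_def block_zero_def zero_mat_0_0_ops)
  qed
  hence "A a + (-1) \<cdot>\<^sub>m A' a = 0\<^sub>m (n a) (n a)" using trivial diff_mem[OF A(1,2)] by simp
  thus ?thesis using mat_eq_if_add_neg_eq_zero carrier A(1,2) S by blast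
qed

text \<open>Otherwise \<open>R\<close> would be the graph of a real-linear map from block \<open>b\<close> onto the bigger
  block \<open>a\<close>.\<close>
lemma two_blocks_larger_nonzero:
  assumes S: "S = {a,b}" "a \<noteq> b" and lt: "n b < n a" and n2: "2 \<le> n a"
    and wc: "weakly_controllable n S R"
  obtains X0 where "X0 \<noteq> 0\<^sub>m (n a) (n a)" "block_single n S a X0 \<in> R"
proof -
  have "\<exists>X0. X0 \<noteq> 0\<^sub>m (n a) (n a) \<and> block_single n S a X0 \<in> R"
  proof (rule ccontr)
    assume "\<not> ?thesis"
    hence trivial: "Y = 0\<^sub>m (n a) (n a)" if "block_single n S a Y \<in> R" for Y using that by blast
    define \<phi> where "\<phi> Y = (SOME Z. \<exists>A\<in>R. A b = Y \<and> A a = Z)" for Y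
    have \<phi>: "\<phi> (A b) = A a" if A: "A \<in> R" for A
    proof -
      have "\<exists>A'\<in>R. A' b = A b \<and> A' a = \<phi> (A b)"
        unfolding \<phi>_def by (rule someI_ex) (use A in blast)
      thus ?thesis using two_blocks_determined[OF S trivial A] by metis
    qed
    have lift: "\<exists>A\<in>R. A b = Y" if "Y \<in> su (n b)" for Y
      using wc S that unfolding weakly_controllable_def by blast
    show False
    proof (rule no_real_linear_surj_su[of "n b" "n a" \<phi>])
      fix Y assume "Y \<in> su (n b)"
      then obtain A where "A \<in> R" "A b = Y" using lift by blast
      thus "\<phi> Y \<in> carrier_mat (n a) (n a)" using \<phi> carrier S by auto
    next
      fix Y1 Y2 assume "Y1 \<in> su (n b)" "Y2 \<in> su (n b)"
      then obtain A1 A2 where A: "A1 \<in> R" "A1 b = Y1" "A2 \<in> R" "A2 b = Y2" using lift by metis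
      show "\<phi> (Y1 + Y2) = \<phi> Y1 + \<phi> Y2"
        using \<phi>[OF real_lie_subalgebra_add[OF lie A(1,3)]] \<phi>[OF A(1)] \<phi>[OF A(3)] A
        by (simp add: bd_add_def)
    next
      fix c Y assume "Y \<in> su (n b)"
      then obtain A where A: "A \<in> R" "A b = Y" using lift by blast
      show "\<phi> (of_real c \<cdot>\<^sub>m Y) = of_real c \<cdot>\<^sub>m \<phi> Y"
        using \<phi>[OF real_lie_subalgebra_scale[OF lie A(1)]] \<phi>[OF A(1)] A by (simp add: bd_scale_def)
    next
      show "su (n a) \<subseteq> \<phi> ` su (n b)"
      proof
        fix Z assume "Z \<in> su (n a)"
        then obtain A where A: "A \<in> R" "A a = Z" using wc S unfolding weakly_controllable_def
          by blast
        have "A b \<in> su (n b)" using A subset_block_su_on block_su_on_su S by blast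
        thus "Z \<in> \<phi> ` su (n b)" using \<phi>[OF A(1)] A(2) by force
      qed
    qed (use lt n2 in auto)
  qed
  thus ?thesis using that by blast
qed

lemma two_blocks_mem_ordered:
  assumes S: "S = {a,b}" "a \<noteq> b" and lt: "n b < n a" and wc: "weakly_controllable n S R"
  shows "X \<in> su (n a) \<Longrightarrow> block_single n S a X \<in> R"
    and "Y \<in> su (n b) \<Longrightarrow> block_single n S b Y \<in> R"
proof -
  have aS: "a \<in> S" and bS: "b \<in> S" using S by auto
  show larger: "block_single n S a X \<in> R" if "X \<in> su (n a)" for X
  proof (cases "n a \<le> 1")
    case True thus ?thesis using block_singles_mem_small aS that by blast
  next
    case False
    then obtain X0 where "X0 \<noteq> 0\<^sub>m (n a) (n a)" "block_single n S a X0 \<in> R"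
      using two_blocks_larger_nonzero[OF S lt _ wc] by force
    thus ?thesis using block_singles_mem_if_nonzero[OF aS wc] that by blast
  qed
  assume Y: "Y \<in> su (n b)"
  obtain A where A: "A \<in> R" "A b = Y" using wc bS Y unfolding weakly_controllable_def by blast
  have "block_single n S a (A a) \<in> R"
    using larger subset_block_su_on block_su_on_su A(1) aS by blast
  moreover have "(\<lambda>k. A k + (-1) \<cdot>\<^sub>m block_single n S a (A a) k) = block_single n S b Y"
  proof (rule ext)
    fix k show "A k + (-1) \<cdot>\<^sub>m block_single n S a (A a) k = block_single n S b Y k"
      using S A(2) mat_add_neg_self[OF carrier[OF A(1) aS]] carrier[OF A(1) bS]
        outside[OF A(1), of k]
      by (cases "k = a"; cases "k = b")
        (auto simp: block_single_def block_zero_def zero_mat_0_0_ops)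
  qed
  ultimately show "block_single n S b Y \<in> R" using diff_mem[OF A(1)] by metis
qed

lemma two_blocks_mem:
  assumes S: "S = {a,b}" "a \<noteq> b" and ne: "n a \<noteq> n b" and wc: "weakly_controllable n S R"
    and j: "j \<in> S" and X: "X \<in> su (n j)"
  shows "block_single n S j X \<in> R"
proof (cases "n b < n a")
  case True thus ?thesis using two_blocks_mem_ordered[OF S True wc] j X S by auto
next
  case False
  hence "n a < n b" using ne by simp
  moreover have "S = {b,a}" "b \<noteq> a" using S by auto
  ultimately show ?thesis using two_blocks_mem_ordered[of b a] wc j X by auto
qed

lemma bracket_concentrated:
  assumes A: "A \<in> R" and C: "C \<in> R" and j: "j \<in> S" and l: "l1 \<noteq> l2"
    and A0: "\<And>k. k \<in> S \<Longrightarrow> k \<noteq> j \<Longrightarrow> k \<noteq> l1 \<Longrightarrow> A k = 0\<^sub>m (n k) (n k)"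
    and C0: "\<And>k. k \<in> S \<Longrightarrow> k \<noteq> j \<Longrightarrow> k \<noteq> l2 \<Longrightarrow> C k = 0\<^sub>m (n k) (n k)"
  shows "bd_bracket A C = block_single n S j (A j * C j - C j * A j)"
proof (rule ext)
  fix k show "bd_bracket A C k = block_single n S j (A j * C j - C j * A j) k"
  proof (cases "k \<in> S")
    case False
    thus ?thesis using outside[OF A False] outside[OF C False] j
      by (auto simp: bd_bracket_def block_single_def block_zero_def zero_mat_0_0_ops)
  next
    case k: True
    consider "k = j" | "k \<noteq> j" "k = l1" | "k \<noteq> j" "k \<noteq> l1" by blast
    thus ?thesis
    proof cases
      case 1 thus ?thesis by (simp add: bd_bracket_def block_single_def)
    next
      case 2 thus ?thesis using C0[OF k] l k commutator_zero_right[OF carrier[OF A k]]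
        by (simp add: bd_bracket_def block_single_def block_zero_def)
    next
      case 3 thus ?thesis using A0[OF k] k commutator_zero_left[OF carrier[OF C k]]
        by (simp add: bd_bracket_def block_single_def block_zero_def)
    qed
  qed
qed

text \<open>With at least three blocks, the induction hypothesis provides elements that agree with a
  prescribed block \<open>j\<close> and vanish outside \<open>j\<close> and one further block; choosing the two further
  blocks different, their bracket is concentrated in block \<open>j\<close>.\<close>
lemma three_blocks_nonzero:
  assumes j: "j \<in> S" and l: "l1 \<in> S" "l2 \<in> S" "j \<noteq> l1" "j \<noteq> l2" "l1 \<noteq> l2"
    and n2: "2 \<le> n j"
    and H1: "block_su_on n (S - {l1}) \<subseteq> block_restrict (S - {l1}) ` R"
    and H2: "block_su_on n (S - {l2}) \<subseteq> block_restrict (S - {l2}) ` R"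
  obtains X0 where "X0 \<noteq> 0\<^sub>m (n j) (n j)" "block_single n S j X0 \<in> R"
proof -
  define X where "X = skew_unit (n j) 0 1 1"
  define Z where "Z = skew_unit (n j) 1 0 (\<i> / 2)"
  have X: "X \<in> su (n j)" and Z: "Z \<in> su (n j)" unfolding X_def Z_def using n2
    by (auto intro: skew_unit_su)
  have "block_single n (S - {l1}) j X \<in> block_restrict (S - {l1}) ` R"
    using H1 block_single_mem_block_su_on[of j "S - {l1}" X n] j l X by blast
  then obtain A where A: "A \<in> R" "block_restrict (S - {l1}) A = block_single n (S - {l1}) j X"
    by (metis imageE)
  have "block_single n (S - {l2}) j Z \<in> block_restrict (S - {l2}) ` R"
    using H2 block_single_mem_block_su_on[of j "S - {l2}" Z n] j l Z by blast
  then obtain C where C: "C \<in> R" "block_restrict (S - {l2}) C = block_single n (S - {l2}) j Z"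
    by (metis imageE)
  have A_at: "A k = (if k = j then X else 0\<^sub>m (n k) (n k))" if "k \<in> S" "k \<noteq> l1" for k
    using fun_cong[OF A(2), of k] that
    by (auto simp: block_restrict_def block_single_def block_zero_def)
  have C_at: "C k = (if k = j then Z else 0\<^sub>m (n k) (n k))" if "k \<in> S" "k \<noteq> l2" for k
    using fun_cong[OF C(2), of k] that
    by (auto simp: block_restrict_def block_single_def block_zero_def)
  have "bd_bracket A C = block_single n S j (X * Z - Z * X)"
    using bracket_concentrated[OF A(1) C(1) j l(5)] A_at C_at j l by simp
  hence "block_single n S j (X * Z - Z * X) \<in> R" using real_lie_subalgebra_bracket[OF lie A(1) C(1)]
    by simp
  moreover have "X * Z - Z * X = skew_diag (n j) 0 1"
    unfolding X_def Z_def using n2 by (intro skew_unit_commutator_skew_diag) auto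
  moreover have "skew_diag (n j) 0 1 $$ (0,0) = \<i>" using n2
    by (simp add: skew_diag_def mat_diag_def)
  hence "skew_diag (n j) 0 1 \<noteq> 0\<^sub>m (n j) (n j)" using n2 by auto
  ultimately show ?thesis using that by metis
qed


lemma many_blocks_mem:
  assumes fin: "finite S" and card: "3 \<le> card S" and wc: "weakly_controllable n S R"
    and restrict_full: "\<And>l. l \<in> S \<Longrightarrow> block_su_on n (S - {l}) \<subseteq> block_restrict (S - {l}) ` R"
    and j: "j \<in> S" and X: "X \<in> su (n j)"
  shows "block_single n S j X \<in> R"
proof (cases "n j \<le> 1")
  case True thus ?thesis using block_singles_mem_small j X by blast
next
  case False
  have "2 \<le> card (S - {j})" using card j fin by (simp add: card_Diff_singleton)
  then obtain T where "T \<subseteq> S - {j}" "card T = 2" by (metis obtain_subset_with_card_n)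
  then obtain l1 l2 where l: "l1 \<in> S" "l2 \<in> S" "j \<noteq> l1" "j \<noteq> l2" "l1 \<noteq> l2"
    by (auto simp: card_2_iff)
  obtain X0 where "X0 \<noteq> 0\<^sub>m (n j) (n j)" "block_single n S j X0 \<in> R"
    using three_blocks_nonzero[OF j l _ restrict_full restrict_full] l False by force
  thus ?thesis using block_singles_mem_if_nonzero[OF j wc] X by blast
qed
end

theorem lie_subalgebra_eq_block_su_on:
  assumes "finite S" "inj_on n S" "R \<subseteq> block_su_on n S" "real_lie_subalgebra R"
    "weakly_controllable n S R"
  shows "R = block_su_on n S"
  using assms
proof (induction "card S" arbitrary: S R rule: less_induct)
  case less
  note fin = less.prems(1) and inj = less.prems(2) and wc = less.prems(5)
  interpret block_lie_subalgebra n S R using less.prems(3,4) by unfold_locales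
  have IH: "block_su_on n (S - {l}) \<subseteq> block_restrict (S - {l}) ` R" if "l \<in> S" for l
  proof -
    have "block_restrict (S - {l}) ` R \<subseteq> block_su_on n (S - {l})"
      using subset_block_su_on block_restrict_mem by blast
    hence "block_restrict (S - {l}) ` R = block_su_on n (S - {l})"
      using less.hyps[OF card_Diff1_less[OF fin that]] fin inj lie wc
      by (meson Diff_subset finite_Diff inj_on_subset real_lie_subalgebra_restrict
          weakly_controllable_restrict)
    thus ?thesis by simp
  qed
  have "block_single n S j X \<in> R" if j: "j \<in> S" and X: "X \<in> su (n j)" for j X
  proof -
    have "card S \<noteq> 0" using j fin by auto
    then consider "card S = 1" | "card S = 2" | "3 \<le> card S" by linarith
    thus ?thesis
    proof cases
      case 1
      hence "S = {j}" using j by (metis card_1_singletonE singletonD)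
      thus ?thesis using one_block_mem wc X by blast
    next
      case 2
      then obtain a b where ab: "S = {a,b}" "a \<noteq> b" by (metis card_2_iff)
      hence "n a \<noteq> n b" using inj by (auto simp: inj_on_def)
      thus ?thesis using two_blocks_mem[OF ab] wc j X by blast
    next
      case 3
      thus ?thesis using many_blocks_mem[OF fin _ wc IH j X] by blast
    qed
  qed
  thus ?case by (rule eq_block_su_on_if_block_singles[OF fin])
qed

theorem lemma4p3:
  fixes n :: "nat \<Rightarrow> nat" and r :: nat and R :: "(nat \<Rightarrow> complex mat) set"
  assumes pos: "\<forall>j<r. n j > 0"
    and distinct: "\<forall>j<r. \<forall>l<r. j \<noteq> l \<longrightarrow> n j \<noteq> n l"
    and sub: "R \<subseteq> block_su n r"
    and lie: "real_lie_subalgebra R"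
    and wsc: "\<forall>j<r. \<forall>Z\<in>su (n j). \<exists>A\<in>R. A j = Z"
  shows "R = block_su n r"
proof -
  have "inj_on n {..<r}" using distinct by (auto simp: inj_on_def)
  moreover have "weakly_controllable n {..<r} R" using wsc by (simp add: weakly_controllable_def)
  ultimately show ?thesis
    using lie_subalgebra_eq_block_su_on[of "{..<r}" n R] sub lie
    unfolding block_su_eq_block_su_on by blast
qed

end
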